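(* Let $m,n$ be positive integers with $4\mid mn$. If there exists a Hadamard matrix of order $mn$, then there exists an $(mn-1)$--$\mathrm{MOFR}(2m,2n;2)$.
   Context: A Hadamard matrix of order $N$ is an $N\times N$ matrix $H$ with entries in $\{1,-1\}$ satisfying $HH^T=NI_N$. A frequency rectangle of type $\mathrm{FR}(m,n;q)$ is an $m\times n$ array on a symbol set of size $q$ in which each symbol appears exactly $n/q$ times in each row and $m/q$ times in each column. Two frequency rectangles of the same type are orthogonal if upon superimposition each ordered pair of symbols appears equally often. A $k$--$\mathrm{MOFR}(m,n;q)$ is a set of $k$ pairwise orthogonal frequency rectangles of type $\mathrm{FR}(m,n;q)$. *)

theory Defs
  imports Main
begin

(* An N x N matrix is a function nat => nat => int, only indices < N matter. *)
definition hadamard :: "nat \<Rightarrow> (nat \<Rightarrow> nat \<Rightarrow> int) \<Rightarrow> bool" where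
  "hadamard N H \<longleftrightarrow>
     (\<forall>i<N. \<forall>j<N. H i j = 1 \<or> H i j = -1) \<and>
     (\<forall>i<N. \<forall>k<N. (\<Sum>j<N. H i j * H k j) = (if i = k then int N else 0))"

definition freq_rect :: "nat \<Rightarrow> nat \<Rightarrow> nat \<Rightarrow> (nat \<Rightarrow> nat \<Rightarrow> nat) \<Rightarrow> bool" where
  "freq_rect m n q A \<longleftrightarrow>
     (\<forall>i<m. \<forall>j<n. A i j < q) \<and>
     (\<forall>i<m. \<forall>s<q. q * card {j. j < n \<and> A i j = s} = n) \<and>
     (\<forall>j<n. \<forall>s<q. q * card {i. i < m \<and> A i j = s} = m)"

definition orth_rect :: "nat \<Rightarrow> nat \<Rightarrow> nat \<Rightarrow> (nat \<Rightarrow> nat \<Rightarrow> nat) \<Rightarrow> (nat \<Rightarrow> nat \<Rightarrow> nat) \<Rightarrow> bool" where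
  "orth_rect m n q A B \<longleftrightarrow>
     (\<forall>s<q. \<forall>t<q. q * q * card {(i, j). i < m \<and> j < n \<and> A i j = s \<and> B i j = t} = m * n)"

definition MOFR :: "nat \<Rightarrow> nat \<Rightarrow> nat \<Rightarrow> nat \<Rightarrow> (nat \<Rightarrow> nat \<Rightarrow> nat \<Rightarrow> nat) \<Rightarrow> bool" where
  "MOFR k m n q F \<longleftrightarrow>
     (\<forall>r<k. freq_rect m n q (F r)) \<and>
     (\<forall>r<k. \<forall>r'<k. r \<noteq> r' \<longrightarrow> orth_rect m n q (F r) (F r'))"

end

theory Submission
  imports Defs
begin

text \<open>Read a row h of the Hadamard matrix H as an m \<times> n array R and tile it as the
  2m \<times> 2n array [[R, -R], [-R, R]]. Every row and column of the tiling contains each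
  entry together with its negative, so it sums to zero; and the entrywise product of
  the tilings of two rows is four copies of their entrywise product, so its sum is four
  times their inner product, which vanishes for distinct rows. Replacing the signs
  1 and -1 by the symbols 0 and 1 turns a \<plusminus>1 array with zero line sums into a
  frequency rectangle, and two such arrays with zero correlation into orthogonal ones.
  This gives mn (in particular mn - 1) mutually orthogonal rectangles, without using 4 | mn.\<close>

lemma sum_lessThan_add_nat:
  fixes f :: "nat \<Rightarrow> 'a::comm_monoid_add"
  shows "(\<Sum>k<a + b. f k) = (\<Sum>k<a. f k) + (\<Sum>k<b. f (a + k))"
  by (induction b) (simp_all add: add_ac)

lemma sum_lessThan_mult_nat:
  fixes f :: "nat \<Rightarrow> 'a::comm_monoid_add"
  shows "(\<Sum>i<m. \<Sum>j<n. f (i * n + j)) = (\<Sum>k<m * n. f k)"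
proof (induction m)
  case (Suc m)
  then show ?case
    using sum_lessThan_add_nat[of f "m * n" n] by (simp add: add.commute)
qed simp

lemma sum_mod_double:
  fixes f :: "nat \<Rightarrow> 'a::comm_semiring_1"
  shows "(\<Sum>i<2 * m. f (i mod m)) = 2 * (\<Sum>i<m. f i)"
proof -
  have "(\<Sum>i<2 * m. f (i mod m)) = (\<Sum>i<m. f (i mod m)) + (\<Sum>i<m. f ((m + i) mod m))"
    using sum_lessThan_add_nat[of "\<lambda>i. f (i mod m)" m m] by (simp add: mult_2)
  also have "\<dots> = (\<Sum>i<m. f i) + (\<Sum>i<m. f i)"
    by (intro arg_cong2[where f = "(+)"] sum.cong) auto
  finally show ?thesis
    by (simp add: mult_2)
qed

definition half_sign :: "nat \<Rightarrow> nat \<Rightarrow> int" where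
  "half_sign m i = (if i < m then 1 else -1)"

lemma half_sign_square [simp]: "half_sign m i * half_sign m i = 1"
  by (simp add: half_sign_def)

lemma sum_half_sign_mod:
  fixes f :: "nat \<Rightarrow> int"
  shows "(\<Sum>i<2 * m. half_sign m i * f (i mod m)) = 0"
proof -
  have "(\<Sum>i<2 * m. half_sign m i * f (i mod m))
      = (\<Sum>i<m. half_sign m i * f (i mod m)) + (\<Sum>i<m. half_sign m (m + i) * f ((m + i) mod m))"
    using sum_lessThan_add_nat[of "\<lambda>i. half_sign m i * f (i mod m)" m m] by (simp add: mult_2)
  also have "\<dots> = (\<Sum>i<m. f i) + (\<Sum>i<m. - f i)"
    by (intro arg_cong2[where f = "(+)"] sum.cong) (auto simp: half_sign_def)
  finally show ?thesis
    by (simp add: sum_negf)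
qed

definition symbol_of_sign :: "int \<Rightarrow> nat" where
  "symbol_of_sign x = (if x = 1 then 0 else 1)"

definition sign_of_symbol :: "nat \<Rightarrow> int" where
  "sign_of_symbol s = (if s = 0 then 1 else -1)"

lemma indicator_symbol_of_sign:
  assumes "x = 1 \<or> x = -1" and "s < 2"
  shows "2 * of_bool (symbol_of_sign x = s) = 1 + sign_of_symbol s * x"
  using assms by (auto simp: symbol_of_sign_def sign_of_symbol_def)

lemma indicator_symbol_pair_of_signs:
  assumes "x = 1 \<or> x = -1" and "y = 1 \<or> y = -1" and "s < 2" and "t < 2"
  shows "4 * of_bool (symbol_of_sign x = s \<and> symbol_of_sign y = t)
    = 1 + sign_of_symbol s * x + sign_of_symbol t * y + sign_of_symbol s * sign_of_symbol t * (x * y)"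
  using assms by (auto simp: symbol_of_sign_def sign_of_symbol_def)

lemma int_card_filter:
  "finite S \<Longrightarrow> int (card {x \<in> S. P x}) = (\<Sum>x\<in>S. of_bool (P x))"
  by (simp add: Int_def)

lemma card_symbol_of_balanced_signs:
  assumes "finite S" and pm: "\<forall>x\<in>S. f x = 1 \<or> f x = -1"
    and balanced: "sum f S = 0" and "s < 2"
  shows "2 * card {x \<in> S. symbol_of_sign (f x) = s} = card S"
proof -
  have "int (2 * card {x \<in> S. symbol_of_sign (f x) = s})
      = (\<Sum>x\<in>S. 2 * of_bool (symbol_of_sign (f x) = s))"
    using \<open>finite S\<close> by (simp add: int_card_filter sum_distrib_left)
  also have "\<dots> = (\<Sum>x\<in>S. 1 + sign_of_symbol s * f x)"
    using pm \<open>s < 2\<close> by (intro sum.cong refl indicator_symbol_of_sign) auto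
  also have "\<dots> = int (card S)"
    using balanced by (simp add: sum.distrib flip: sum_distrib_left)
  finally show ?thesis
    by linarith
qed

lemma card_symbol_pair_of_uncorrelated_signs:
  assumes "finite S"
    and pm: "\<forall>x\<in>S. f x = 1 \<or> f x = -1" "\<forall>x\<in>S. g x = 1 \<or> g x = -1"
    and balanced: "sum f S = 0" "sum g S = 0"
    and uncorrelated: "(\<Sum>x\<in>S. f x * g x) = 0"
    and "s < 2" and "t < 2"
  shows "4 * card {x \<in> S. symbol_of_sign (f x) = s \<and> symbol_of_sign (g x) = t} = card S"
proof -
  have "int (4 * card {x \<in> S. symbol_of_sign (f x) = s \<and> symbol_of_sign (g x) = t})
      = (\<Sum>x\<in>S. 4 * of_bool (symbol_of_sign (f x) = s \<and> symbol_of_sign (g x) = t))"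
    using \<open>finite S\<close> by (simp add: int_card_filter sum_distrib_left)
  also have "\<dots> = (\<Sum>x\<in>S. 1 + sign_of_symbol s * f x + sign_of_symbol t * g x
                     + sign_of_symbol s * sign_of_symbol t * (f x * g x))"
    using pm \<open>s < 2\<close> \<open>t < 2\<close> by (intro sum.cong refl indicator_symbol_pair_of_signs) auto
  also have "\<dots> = int (card S)"
    using balanced uncorrelated by (simp add: sum.distrib flip: sum_distrib_left)
  finally show ?thesis
    by linarith
qed

lemma freq_rect_symbol_of_sign:
  assumes pm: "\<forall>i<m. \<forall>j<n. A i j = 1 \<or> A i j = -1"
    and rows: "\<forall>i<m. (\<Sum>j<n. A i j) = 0"
    and cols: "\<forall>j<n. (\<Sum>i<m. A i j) = 0"
  shows "freq_rect m n 2 (\<lambda>i j. symbol_of_sign (A i j))"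
proof -
  have "2 * card {j. j < n \<and> symbol_of_sign (A i j) = s} = n" if "i < m" "s < 2" for i s
    using card_symbol_of_balanced_signs[of "{..<n}" "A i" s] pm rows that
    by (simp add: lessThan_def)
  moreover have "2 * card {i. i < m \<and> symbol_of_sign (A i j) = s} = m" if "j < n" "s < 2" for j s
    using card_symbol_of_balanced_signs[of "{..<m}" "\<lambda>i. A i j" s] pm cols that
    by (simp add: lessThan_def)
  ultimately show ?thesis
    unfolding freq_rect_def by (simp add: symbol_of_sign_def)
qed

lemma orth_rect_symbol_of_sign:
  assumes pm: "\<forall>i<m. \<forall>j<n. A i j = 1 \<or> A i j = -1" "\<forall>i<m. \<forall>j<n. B i j = 1 \<or> B i j = -1"
    and balanced: "(\<Sum>i<m. \<Sum>j<n. A i j) = 0" "(\<Sum>i<m. \<Sum>j<n. B i j) = 0"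
    and uncorrelated: "(\<Sum>i<m. \<Sum>j<n. A i j * B i j) = 0"
  shows "orth_rect m n 2 (\<lambda>i j. symbol_of_sign (A i j)) (\<lambda>i j. symbol_of_sign (B i j))"
proof -
  let ?S = "{..<m} \<times> {..<n}"
  have double_sum: "(\<Sum>i<m. \<Sum>j<n. C i j) = (\<Sum>x\<in>?S. case_prod C x)" for C :: "nat \<Rightarrow> nat \<Rightarrow> int"
    by (simp add: sum.cartesian_product)
  have "2 * 2 * card {(i, j). i < m \<and> j < n \<and> symbol_of_sign (A i j) = s \<and> symbol_of_sign (B i j) = t}
      = m * n" if "s < 2" "t < 2" for s t
  proof -
    have "{(i, j). i < m \<and> j < n \<and> symbol_of_sign (A i j) = s \<and> symbol_of_sign (B i j) = t}
        = {x \<in> ?S. symbol_of_sign (case_prod A x) = s \<and> symbol_of_sign (case_prod B x) = t}"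
      by auto
    then show ?thesis
      using card_symbol_pair_of_uncorrelated_signs[of ?S "case_prod A" "case_prod B" s t]
        pm balanced uncorrelated that
      by (simp add: double_sum case_prod_beta card_cartesian_product)
  qed
  then show ?thesis
    unfolding orth_rect_def by blast
qed

lemma MOFR_mono: "k' \<le> k \<Longrightarrow> MOFR k m n q F \<Longrightarrow> MOFR k' m n q F"
  unfolding MOFR_def by auto

definition signed_tiling :: "nat \<Rightarrow> nat \<Rightarrow> (nat \<Rightarrow> int) \<Rightarrow> nat \<Rightarrow> nat \<Rightarrow> int" where
  "signed_tiling m n h i j = half_sign m i * half_sign n j * h ((i mod m) * n + j mod n)"

lemma reshape_index_less:
  assumes "0 < m" and "0 < (n::nat)"
  shows "(i mod m) * n + j mod n < m * n"
proof -
  have "Suc (i mod m) * n \<le> m * n"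
    using \<open>0 < m\<close> by (intro mult_right_mono) (auto simp: Suc_le_eq)
  moreover have "j mod n < n"
    using \<open>0 < n\<close> by simp
  ultimately show ?thesis
    by simp
qed

lemma signed_tiling_sign:
  assumes "0 < m" and "0 < n" and "\<forall>k<m * n. h k = 1 \<or> h k = -1"
  shows "signed_tiling m n h i j = 1 \<or> signed_tiling m n h i j = -1"
  using assms reshape_index_less[OF assms(1,2), of i j]
  by (auto simp: signed_tiling_def half_sign_def)

lemma sum_signed_tiling_row: "(\<Sum>j<2 * n. signed_tiling m n h i j) = 0"
proof -
  have "(\<Sum>j<2 * n. signed_tiling m n h i j)
      = (\<Sum>j<2 * n. half_sign n j * (\<lambda>j'. half_sign m i * h ((i mod m) * n + j')) (j mod n))"
    unfolding signed_tiling_def by (intro sum.cong) (auto simp: ac_simps)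
  also have "\<dots> = 0"
    by (rule sum_half_sign_mod)
  finally show ?thesis .
qed

lemma sum_signed_tiling_col: "(\<Sum>i<2 * m. signed_tiling m n h i j) = 0"
proof -
  have "(\<Sum>i<2 * m. signed_tiling m n h i j)
      = (\<Sum>i<2 * m. half_sign m i * (\<lambda>i'. half_sign n j * h (i' * n + j mod n)) (i mod m))"
    unfolding signed_tiling_def by (intro sum.cong) (auto simp: ac_simps)
  also have "\<dots> = 0"
    by (rule sum_half_sign_mod)
  finally show ?thesis .
qed

lemma sum_signed_tiling_mult:
  "(\<Sum>i<2 * m. \<Sum>j<2 * n. signed_tiling m n h i j * signed_tiling m n h' i j)
    = 4 * (\<Sum>k<m * n. h k * h' k)"
proof -
  let ?p = "\<lambda>k. h k * h' k"
  have tile: "signed_tiling m n h i j * signed_tiling m n h' i j = ?p ((i mod m) * n + j mod n)" for i j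
    unfolding signed_tiling_def
    by (simp add: ac_simps)
  define G where "G i' = (\<Sum>j<2 * n. ?p (i' * n + j mod n))" for i'
  have G: "G i' = 2 * (\<Sum>j<n. ?p (i' * n + j))" for i'
    unfolding G_def by (rule sum_mod_double)
  have "(\<Sum>i<2 * m. \<Sum>j<2 * n. signed_tiling m n h i j * signed_tiling m n h' i j)
      = (\<Sum>i<2 * m. G (i mod m))"
    unfolding G_def by (simp add: tile)
  also have "\<dots> = 2 * (\<Sum>i<m. G i)"
    by (rule sum_mod_double)
  also have "\<dots> = 4 * (\<Sum>i<m. \<Sum>j<n. ?p (i * n + j))"
    by (simp add: G sum_distrib_left)
  also have "\<dots> = 4 * (\<Sum>k<m * n. ?p k)"
    using sum_lessThan_mult_nat[where f = ?p and m = m and n = n] by simp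
  finally show ?thesis .
qed

theorem mainTheorem2:
  fixes m n :: nat
  assumes "m > 0" and "n > 0" and "4 dvd m * n"
    and "\<exists>H. hadamard (m * n) H"
  shows "\<exists>F. MOFR (m * n - 1) (2 * m) (2 * n) 2 F"
proof -
  obtain H where H: "hadamard (m * n) H"
    using assms(4) by blast
  define T where "T r = signed_tiling m n (H r)" for r
  have sign: "\<forall>i<2 * m. \<forall>j<2 * n. T r i j = 1 \<or> T r i j = -1" if "r < m * n" for r
    using H that signed_tiling_sign[OF assms(1,2)] unfolding T_def hadamard_def by blast
  have balanced: "(\<Sum>i<2 * m. \<Sum>j<2 * n. T r i j) = 0" for r
    by (simp add: T_def sum_signed_tiling_row)
  have uncorrelated: "(\<Sum>i<2 * m. \<Sum>j<2 * n. T r i j * T r' i j) = 0"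
    if "r < m * n" "r' < m * n" "r \<noteq> r'" for r r'
    using H that by (simp add: T_def sum_signed_tiling_mult hadamard_def)
  have "MOFR (m * n) (2 * m) (2 * n) 2 (\<lambda>r i j. symbol_of_sign (T r i j))"
    unfolding MOFR_def
    using sign balanced uncorrelated freq_rect_symbol_of_sign orth_rect_symbol_of_sign
    by (simp add: T_def sum_signed_tiling_row sum_signed_tiling_col)
  then show ?thesis
    by (meson MOFR_mono diff_le_self)
qed

end
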